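(* Let $\alpha:[r]\to[m]$, $\alpha':[r']\to[m]$ be increasing and $\beta:[r]\to[n]$, $\beta':[r']\to[n]$ injective. If there exist $L\in L_m(P_m)$ and $R\in L_n(P_n)$ with $L\,\Pi(\alpha,\beta)=\Pi(\alpha',\beta')\,R$, then $\Pi(\alpha,\beta)=\Pi(\alpha',\beta')$.
   Context: $\mathbb{F}$ is the field with two elements, $[n]=\{1,\dots,n\}$, $e_{n,i}$ standard basis column vectors, $I_n$ identity. $P_n=\{(i,j):i,j\in[n],i>j\}$ and $L_n(P_n)=I_n+\mathrm{span}\{e_{n,i}e_{n,j}^{\top}:i>j\}$ is the group of lower unitriangular matrices. $\Pi(\alpha,\beta)=\sum_{i=1}^re_{m,\alpha(i)}e_{n,\beta(i)}^{\top}\in\mathbb{F}^{m\times n}$ (an incomplete permutation matrix). *)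

theory Defs
  imports "Jordan_Normal_Form.Matrix" "HOL-Library.Z2"
begin

text \<open>The field with two elements is the type bit (HOL-Library.Z2).
  Indices are 0-based: [n] = {1..n} is rendered as {0..<n}.\<close>

definition lower_unitri :: "nat \<Rightarrow> bit mat set" where
  "lower_unitri n = {L. L \<in> carrier_mat n n
     \<and> (\<forall>i<n. L $$ (i, i) = 1)
     \<and> (\<forall>i<n. \<forall>j<n. i < j \<longrightarrow> L $$ (i, j) = 0)}"

definition Pim :: "nat \<Rightarrow> nat \<Rightarrow> nat \<Rightarrow> (nat \<Rightarrow> nat) \<Rightarrow> (nat \<Rightarrow> nat) \<Rightarrow> bit mat" where
  "Pim m n r \<alpha> \<beta> = mat m n (\<lambda>(i, j). \<Sum>k<r. if \<alpha> k = i \<and> \<beta> k = j then 1 else 0)"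

end

theory Submission
  imports Defs
begin

text \<open>Compare A = Pi(alpha,beta) and A' = Pi(alpha',beta') entry by entry, rows from top
  to bottom and, within a row, columns from right to left. At the first position (p,c) in
  this order, (L A)(p,c) = A(p,c) + sum_{k<p} L(p,k) A(k,c) and
  (A' R)(p,c) = A'(p,c) + sum_{k>c} A'(p,k) R(k,c). If column c has a one above row p, or
  row p has a one right of column c, that one is common to A and A', so A(p,c) = A'(p,c) = 0
  because both are partial permutation matrices. Otherwise both sums vanish and
  A(p,c) = A'(p,c) follows from L A = A' R. Only the injectivity of the index maps is used.\<close>

definition lower_unitriangular :: "'a::{zero,one} mat \<Rightarrow> bool" where
  "lower_unitriangular L \<longleftrightarrow> (\<forall>i<dim_row L. L $$ (i, i) = 1)
     \<and> (\<forall>i<dim_row L. \<forall>j<dim_col L. i < j \<longrightarrow> L $$ (i, j) = 0)"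

definition partial_perm_mat :: "'a::{zero,one} mat \<Rightarrow> bool" where
  "partial_perm_mat A \<longleftrightarrow> (\<forall>i<dim_row A. \<forall>j<dim_col A. A $$ (i, j) = 0 \<or> A $$ (i, j) = 1)
     \<and> (\<forall>i<dim_row A. \<forall>j<dim_col A. \<forall>j'<dim_col A. A $$ (i, j) = 1 \<longrightarrow> A $$ (i, j') = 1 \<longrightarrow> j = j')
     \<and> (\<forall>i<dim_row A. \<forall>i'<dim_row A. \<forall>j<dim_col A. A $$ (i, j) = 1 \<longrightarrow> A $$ (i', j) = 1 \<longrightarrow> i = i')"

lemma mem_lower_unitri_iff: "L \<in> lower_unitri n \<longleftrightarrow> L \<in> carrier_mat n n \<and> lower_unitriangular L"
  by (auto simp: lower_unitri_def lower_unitriangular_def)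

lemma sum_lessThan_eq_single:
  fixes f :: "nat \<Rightarrow> 'a::comm_monoid_add"
  assumes "p < m" and "\<And>k. k < m \<Longrightarrow> k \<noteq> p \<Longrightarrow> f k = 0"
  shows "(\<Sum>k<m. f k) = f p"
proof -
  have "(\<Sum>k<m. f k) = (\<Sum>k<m. if k = p then f p else 0)"
    using assms(2) by (intro sum.cong) auto
  then show ?thesis
    using assms(1) by simp
qed

lemma lower_unitriangular_mult_index:
  fixes L A :: "'a::semiring_1 mat"
  assumes "L \<in> carrier_mat m m" "lower_unitriangular L" "A \<in> carrier_mat m n"
    and "p < m" "c < n" and "\<And>k. k < p \<Longrightarrow> A $$ (k, c) = 0"
  shows "(L * A) $$ (p, c) = A $$ (p, c)"
proof -
  have "(L * A) $$ (p, c) = (\<Sum>k<m. L $$ (p, k) * A $$ (k, c))"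
    using assms(1,3-5) by (simp add: scalar_prod_def atLeast0LessThan)
  also have "\<dots> = L $$ (p, p) * A $$ (p, c)"
    using assms by (intro sum_lessThan_eq_single) (auto simp: lower_unitriangular_def nat_neq_iff)
  finally show ?thesis
    using assms(1,2,4) by (simp add: lower_unitriangular_def)
qed

lemma mult_lower_unitriangular_index:
  fixes A R :: "'a::semiring_1 mat"
  assumes "R \<in> carrier_mat n n" "lower_unitriangular R" "A \<in> carrier_mat m n"
    and "p < m" "c < n" and "\<And>k. c < k \<Longrightarrow> k < n \<Longrightarrow> A $$ (p, k) = 0"
  shows "(A * R) $$ (p, c) = A $$ (p, c)"
proof -
  have "(A * R) $$ (p, c) = (\<Sum>k<n. A $$ (p, k) * R $$ (k, c))"
    using assms(1,3-5) by (simp add: scalar_prod_def atLeast0LessThan)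
  also have "\<dots> = A $$ (p, c) * R $$ (c, c)"
    using assms by (intro sum_lessThan_eq_single) (auto simp: lower_unitriangular_def nat_neq_iff)
  finally show ?thesis
    using assms(1,2,5) by (simp add: lower_unitriangular_def)
qed

lemma partial_perm_mat_index_eq:
  fixes A A' L R :: "'a::semiring_1 mat"
  assumes A: "A \<in> carrier_mat m n" "partial_perm_mat A"
    and A': "A' \<in> carrier_mat m n" "partial_perm_mat A'"
    and L: "L \<in> carrier_mat m m" "lower_unitriangular L"
    and R: "R \<in> carrier_mat n n" "lower_unitriangular R"
    and eq: "L * A = A' * R"
    and "p < m" "c < n"
    and above: "\<And>k. k < p \<Longrightarrow> A $$ (k, c) = A' $$ (k, c)"
    and right: "\<And>k. c < k \<Longrightarrow> k < n \<Longrightarrow> A $$ (p, k) = A' $$ (p, k)"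
  shows "A $$ (p, c) = A' $$ (p, c)"
proof -
  have zero_one: "B $$ (i, j) = 0 \<or> B $$ (i, j) = 1"
    if "B = A \<or> B = A'" "i < m" "j < n" for B i j
    using that A A' by (auto simp: partial_perm_mat_def)
  consider (shared_above) k where "k < p" "A $$ (k, c) = 1"
    | (shared_right) k where "c < k" "k < n" "A' $$ (p, k) = 1"
    | (none) "\<And>k. k < p \<Longrightarrow> A $$ (k, c) = 0" "\<And>k. c < k \<Longrightarrow> k < n \<Longrightarrow> A' $$ (p, k) = 0"
  proof (atomize_elim)
    have "A $$ (k, c) = 0" if "k < p" "A $$ (k, c) \<noteq> 1" for k
      using zero_one[of A k c] that \<open>p < m\<close> \<open>c < n\<close> by auto
    moreover have "A' $$ (p, k) = 0" if "c < k" "k < n" "A' $$ (p, k) \<noteq> 1" for k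
      using zero_one[of A' p k] that \<open>p < m\<close> by auto
    ultimately show "(\<exists>k<p. A $$ (k, c) = 1) \<or> (\<exists>k. c < k \<and> k < n \<and> A' $$ (p, k) = 1)
      \<or> (\<forall>k<p. A $$ (k, c) = 0) \<and> (\<forall>k. c < k \<longrightarrow> k < n \<longrightarrow> A' $$ (p, k) = 0)"
      by blast
  qed
  then show ?thesis
  proof cases
    case shared_above
    moreover have "k < m"
      using shared_above \<open>p < m\<close> by simp
    ultimately have "A $$ (p, c) \<noteq> 1" "A' $$ (p, c) \<noteq> 1"
      using A A' above[of k] \<open>p < m\<close> \<open>c < n\<close> unfolding partial_perm_mat_def by (metis carrier_matD less_irrefl)+
    then show ?thesis
      using zero_one \<open>p < m\<close> \<open>c < n\<close> by metis
  next
    case shared_right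
    then have "A $$ (p, c) \<noteq> 1" "A' $$ (p, c) \<noteq> 1"
      using A A' right[of k] \<open>p < m\<close> \<open>c < n\<close> unfolding partial_perm_mat_def by (metis carrier_matD less_irrefl)+
    then show ?thesis
      using zero_one \<open>p < m\<close> \<open>c < n\<close> by metis
  next
    case none
    have "A $$ (p, c) = (L * A) $$ (p, c)"
      using lower_unitriangular_mult_index[OF L A(1) \<open>p < m\<close> \<open>c < n\<close>] none(1) by simp
    also have "\<dots> = (A' * R) $$ (p, c)"
      using eq by simp
    also have "\<dots> = A' $$ (p, c)"
      using mult_lower_unitriangular_index[OF R A'(1) \<open>p < m\<close> \<open>c < n\<close>] none(2) by simp
    finally show ?thesis .
  qed
qed

lemma partial_perm_mat_eq_if_lower_unitriangular_equiv:
  fixes A A' L R :: "'a::semiring_1 mat"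
  assumes A: "A \<in> carrier_mat m n" "partial_perm_mat A"
    and A': "A' \<in> carrier_mat m n" "partial_perm_mat A'"
    and L: "L \<in> carrier_mat m m" "lower_unitriangular L"
    and R: "R \<in> carrier_mat n n" "lower_unitriangular R"
    and eq: "L * A = A' * R"
  shows "A = A'"
proof -
  have "A $$ (p, c) = A' $$ (p, c)" if "p < m" "c < n" for p c
    using that
  proof (induction p arbitrary: c rule: less_induct)
    case (less p)
    note rows_above = less.IH
    show ?case
      using \<open>c < n\<close>
    proof (induction "n - c" arbitrary: c rule: less_induct)
      case less
      show ?case
      proof (rule partial_perm_mat_index_eq[OF A A' L R eq \<open>p < m\<close> \<open>c < n\<close>])
        show "A $$ (k, c) = A' $$ (k, c)" if "k < p" for k
          using rows_above that \<open>p < m\<close> \<open>c < n\<close> by simp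
        show "A $$ (p, k) = A' $$ (p, k)" if "c < k" "k < n" for k
          using less.hyps that by simp
      qed
    qed
  qed
  with A A' show ?thesis
    by (intro eq_matI) auto
qed

lemma index_Pim:
  assumes "i < m" "j < n" "inj_on \<alpha> {..<r}"
  shows "Pim m n r \<alpha> \<beta> $$ (i, j) = (if \<exists>k<r. \<alpha> k = i \<and> \<beta> k = j then 1 else 0)"
proof (cases "\<exists>k<r. \<alpha> k = i \<and> \<beta> k = j")
  case True
  then obtain k where k: "k < r" "\<alpha> k = i" "\<beta> k = j"
    by auto
  have "(\<Sum>l<r. if \<alpha> l = i \<and> \<beta> l = j then 1 else 0) = (if \<alpha> k = i \<and> \<beta> k = j then 1 else (0::bit))"
    using k assms(3) by (intro sum_lessThan_eq_single) (auto simp: inj_on_def)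
  then show ?thesis
    using assms True k by (simp add: Pim_def)
next
  case False
  then show ?thesis
    using assms by (auto simp: Pim_def intro!: sum.neutral)
qed

lemma partial_perm_mat_Pim:
  assumes "inj_on \<alpha> {..<r}" "inj_on \<beta> {..<r}"
  shows "partial_perm_mat (Pim m n r \<alpha> \<beta>)"
proof -
  let ?P = "Pim m n r \<alpha> \<beta>"
  have one_iff: "?P $$ (i, j) = 1 \<longleftrightarrow> (\<exists>k<r. \<alpha> k = i \<and> \<beta> k = j)" if "i < m" "j < n" for i j
    using index_Pim[OF that assms(1)] by simp
  show ?thesis
    unfolding partial_perm_mat_def
  proof (intro conjI allI impI)
    fix i j
    show "?P $$ (i, j) = 0 \<or> ?P $$ (i, j) = 1"
      using bit_not_zero_iff by blast
  next
    fix i j j' assume "i < dim_row ?P" "j < dim_col ?P" "j' < dim_col ?P"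
      and "?P $$ (i, j) = 1" "?P $$ (i, j') = 1"
    then show "j = j'"
      using one_iff assms(1) by (auto simp: Pim_def inj_on_def)
  next
    fix i i' j assume "i < dim_row ?P" "i' < dim_row ?P" "j < dim_col ?P"
      and "?P $$ (i, j) = 1" "?P $$ (i', j) = 1"
    then show "i = i'"
      using one_iff assms(2) by (auto simp: Pim_def inj_on_def)
  qed
qed

theorem lemma4:
  fixes m n r r' :: nat and \<alpha> \<alpha>' \<beta> \<beta>' :: "nat \<Rightarrow> nat"
  assumes "\<alpha> ` {..<r} \<subseteq> {..<m}" and "strict_mono_on {..<r} \<alpha>"
    and "\<alpha>' ` {..<r'} \<subseteq> {..<m}" and "strict_mono_on {..<r'} \<alpha>'"
    and "\<beta> ` {..<r} \<subseteq> {..<n}" and "inj_on \<beta> {..<r}"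
    and "\<beta>' ` {..<r'} \<subseteq> {..<n}" and "inj_on \<beta>' {..<r'}"
    and "\<exists>L \<in> lower_unitri m. \<exists>R \<in> lower_unitri n.
           L * Pim m n r \<alpha> \<beta> = Pim m n r' \<alpha>' \<beta>' * R"
  shows "Pim m n r \<alpha> \<beta> = Pim m n r' \<alpha>' \<beta>'"
proof -
  obtain L R where L: "L \<in> lower_unitri m" and R: "R \<in> lower_unitri n"
    and eq: "L * Pim m n r \<alpha> \<beta> = Pim m n r' \<alpha>' \<beta>' * R"
    using assms(9) by blast
  have "Pim m n r \<alpha> \<beta> \<in> carrier_mat m n" "Pim m n r' \<alpha>' \<beta>' \<in> carrier_mat m n"
    by (simp_all add: Pim_def)
  moreover have "partial_perm_mat (Pim m n r \<alpha> \<beta>)" "partial_perm_mat (Pim m n r' \<alpha>' \<beta>')"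
    using assms(2,4,6,8) by (simp_all add: partial_perm_mat_Pim strict_mono_on_imp_inj_on)
  moreover have "L \<in> carrier_mat m m" "lower_unitriangular L" "R \<in> carrier_mat n n" "lower_unitriangular R"
    using L R by (simp_all add: mem_lower_unitri_iff)
  ultimately show ?thesis
    using partial_perm_mat_eq_if_lower_unitriangular_equiv eq by blast
qed

end
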